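(* Consider the centralized caching problem with uncoded prefetching with $N$ files, $K$ users, and local cache size of $M$ files per user, $t=KM/N$, with generalized demands. For every file size $F$, every $\epsilon>0$, and every generalized statistics $\boldsymbol{s}$, $$\min_{\boldsymbol{\mathcal{M}}}R^*_{\epsilon,K}(\boldsymbol{s},\boldsymbol{\mathcal{M}})\ \ge\ \mathrm{Conv}\left(\frac{\binom{K}{t+1}-\binom{K-N_{\mathrm{e}}(\boldsymbol{s})}{t+1}}{\binom{K}{t}}\right)-\left(\frac{1}{F}+N_{\mathrm{e}}^2(\boldsymbol{s})\epsilon\right),$$ where the minimum is over all uncoded prefetchings satisfying the memory constraint and $\mathrm{Conv}(f(t))$ denotes the lower convex envelope of the points $\{(t,f(t)):t\in\{0,1,\dots,K\}\}$, evaluated at $t=KM/N$.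
   Context: Setting: $N$ files of $F$ bits each, all bits i.i.d. Bernoulli$(1/2)$; $K$ users each with $MF$ bits of cache, $M\in[0,N]$. An uncoded prefetching $\boldsymbol{\mathcal{M}}=(\mathcal{M}_1,\dots,\mathcal{M}_K)$: each $\mathcal{M}_k$ is a set of at most $MF$ bit indices and user $k$ stores those bits. A generalized demand is $\boldsymbol{d}=(d_1,\dots,d_K)\in\{0,1,\dots,N\}^K$, where $d_k\neq0$ means user $k$ requests file $W_{d_k}$ and $d_k=0$ means user $k$ makes no request. A rate $R$ is $\epsilon$-achievable for $\boldsymbol{\mathcal{M}},\boldsymbol{d}$ if there are an encoder $X=\psi(W_1,\dots,W_N)\in\{0,1\}^{RF}$ and decoders such that each requesting user $k$ recovers $W_{d_k}$ from $X$ and its cached bits with error probability at most $\epsilon$; $R^*_{\epsilon,K}(\boldsymbol{d},\boldsymbol{\mathcal{M}})$ is the minimum such rate. The statistics of a generalized demand is the length-$N$ array, sorted nonincreasingly, whose $i$-th entry is the number of users requesting the $i$-th most requested file; the generalized type $\mathcal{D}_{\boldsymbol{s}}$ is the set of generalized demands with statistics $\boldsymbol{s}$; $N_{\mathrm{e}}(\boldsymbol{s})$ is the number of distinct requested files. $R^*_{\epsilon,K}(\boldsymbol{s},\boldsymbol{\mathcal{M}})$ is the average of $R^*_{\epsilon,K}(\boldsymbol{d},\boldsymbol{\mathcal{M}})$ over $\boldsymbol{d}\in\mathcal{D}_{\boldsymbol{s}}$. Convention: $\binom{n}{k}=0$ when $k>n$. *)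

theory Defs
  imports Complex_Main
begin

text \<open>Bit indices of the library: (file n, position j) with n in 1..N, j < F.\<close>
definition bit_idx :: "nat \<Rightarrow> nat \<Rightarrow> (nat \<times> nat) set" where
  "bit_idx N F = {1..N} \<times> {0..<F}"

text \<open>Library realizations (all bits outside the index set are fixed to False).
  Since bits are i.i.d. Bernoulli(1/2), the library is uniform over this finite set.\<close>
definition libs :: "nat \<Rightarrow> nat \<Rightarrow> ((nat \<times> nat) \<Rightarrow> bool) set" where
  "libs N F = {w. \<forall>i. i \<notin> bit_idx N F \<longrightarrow> w i = False}"

definition valid_prefetch :: "nat \<Rightarrow> nat \<Rightarrow> nat \<Rightarrow> real \<Rightarrow> (nat \<Rightarrow> (nat \<times> nat) set) \<Rightarrow> bool" where
  "valid_prefetch N K F M Mc \<longleftrightarrow>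
     (\<forall>k<K. Mc k \<subseteq> bit_idx N F \<and> real (card (Mc k)) \<le> M * real F)"

definition cached :: "(nat \<times> nat) set \<Rightarrow> ((nat \<times> nat) \<Rightarrow> bool) \<Rightarrow> ((nat \<times> nat) \<Rightarrow> bool)" where
  "cached S w = (\<lambda>i. if i \<in> S then w i else False)"

text \<open>Generalized demands: d k in {0..N} for users k < K (0 = no request).\<close>
definition gen_demands :: "nat \<Rightarrow> nat \<Rightarrow> (nat \<Rightarrow> nat) set" where
  "gen_demands N K = {d. (\<forall>k<K. d k \<le> N) \<and> (\<forall>k\<ge>K. d k = 0)}"

definition err_prob ::
  "nat \<Rightarrow> nat \<Rightarrow> (nat \<times> nat) set \<Rightarrow> nat \<Rightarrow> (((nat \<times> nat) \<Rightarrow> bool) \<Rightarrow> bool list)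
   \<Rightarrow> (bool list \<Rightarrow> ((nat \<times> nat) \<Rightarrow> bool) \<Rightarrow> (nat \<Rightarrow> bool)) \<Rightarrow> real" where
  "err_prob N F S n psi dec =
     real (card {w \<in> libs N F. \<not> (\<forall>j<F. dec (psi w) (cached S w) j = w (n, j))})
     / real (card (libs N F))"

definition achievable ::
  "nat \<Rightarrow> nat \<Rightarrow> nat \<Rightarrow> real \<Rightarrow> (nat \<Rightarrow> nat) \<Rightarrow> (nat \<Rightarrow> (nat \<times> nat) set) \<Rightarrow> nat \<Rightarrow> bool" where
  "achievable N K F eps d Mc L \<longleftrightarrow>
     (\<exists>psi dec. (\<forall>w\<in>libs N F. length (psi w) = L) \<and>
        (\<forall>k<K. d k \<noteq> 0 \<longrightarrow> err_prob N F (Mc k) (d k) psi (dec k) \<le> eps))"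

definition opt_rate_d ::
  "nat \<Rightarrow> nat \<Rightarrow> nat \<Rightarrow> real \<Rightarrow> (nat \<Rightarrow> nat) \<Rightarrow> (nat \<Rightarrow> (nat \<times> nat) set) \<Rightarrow> real" where
  "opt_rate_d N K F eps d Mc = Inf {real L / real F | L. achievable N K F eps d Mc L}"

definition demand_stats :: "nat \<Rightarrow> nat \<Rightarrow> (nat \<Rightarrow> nat) \<Rightarrow> nat list" where
  "demand_stats N K d = rev (sort (map (\<lambda>n. card {k. k < K \<and> d k = n}) [1..<N+1]))"

definition demand_type :: "nat \<Rightarrow> nat \<Rightarrow> nat list \<Rightarrow> (nat \<Rightarrow> nat) set" where
  "demand_type N K s = {d \<in> gen_demands N K. demand_stats N K d = s}"

definition N_e :: "nat list \<Rightarrow> nat" where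
  "N_e s = length (filter (\<lambda>x. x > 0) s)"

definition opt_rate_s ::
  "nat \<Rightarrow> nat \<Rightarrow> nat \<Rightarrow> real \<Rightarrow> nat list \<Rightarrow> (nat \<Rightarrow> (nat \<times> nat) set) \<Rightarrow> real" where
  "opt_rate_s N K F eps s Mc =
     (\<Sum>d\<in>demand_type N K s. opt_rate_d N K F eps d Mc) / real (card (demand_type N K s))"

definition lower_conv_env :: "nat \<Rightarrow> (nat \<Rightarrow> real) \<Rightarrow> real \<Rightarrow> real" where
  "lower_conv_env K f x = Inf {\<Sum>i\<le>K. lam i * f i | lam.
      (\<forall>i\<le>K. lam i \<ge> 0) \<and> (\<Sum>i\<le>K. lam i) = 1 \<and> (\<Sum>i\<le>K. lam i * real i) = x}"

end

theory Submission
  imports Defs "HOL-Combinatorics.Permutations"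
begin

text \<open>Fix a demand and order \<open>n = N_e s\<close> users with distinct requested files. Decoding them
  one after another, every bit of a requested file that none of the users decoded so far caches is
  determined by the transmission and the remaining library bits, so by counting (a form of Fano's
  inequality) the rate is at least the number of such bits over \<open>F\<close>, up to the loss
  \<open>1/F + n\<^sup>2 \<epsilon>\<close>. Averaging over all demands of the type and all such orderings, invariance
  under relabelling files and users shows that a bit cached by exactly \<open>t\<close> users contributes
  \<open>(C(K,t+1) - C(K-n,t+1)) / (N C(K,t))\<close> on average. This function of \<open>t\<close> is nonnegative and
  vanishes at \<open>t = K\<close>, and the memory constraint makes the average of \<open>t\<close> over all bits at most
  \<open>KM/N\<close>; hence the average rate dominates the lower convex envelope at \<open>KM/N\<close>.\<close>

section \<open>A counting form of Fano's inequality\<close>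

lemma square_le_two_power: "(n::nat)^2 \<le> 2^(n+2)"
proof (induction n rule: nat_less_induct)
  case (1 n)
  show ?case
  proof (cases "n \<le> 3")
    case True
    then have "n = 0 \<or> n = 1 \<or> n = 2 \<or> n = 3" by auto
    then show ?thesis by auto
  next
    case False
    then obtain m where m: "n = Suc m" "m \<ge> 3" by (cases n) auto
    have IH: "m^2 \<le> 2^(m+2)" using 1 m by auto
    have "3 * m \<le> m * m" using m(2) by simp
    then have "Suc (m + m) \<le> m * m" using m(2) by linarith
    then have "(Suc m)^2 \<le> 2 * m^2" by (simp add: power2_eq_square)
    then show ?thesis using IH m(1) by simp
  qed
qed

lemma real_le_two_powr_half: "real n \<le> 2 powr (1 + real n / 2)"
proof -
  have "real n ^ 2 \<le> 2 ^ (n + 2)"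
    using square_le_two_power[of n] by (metis of_nat_le_iff of_nat_numeral of_nat_power)
  also have "\<dots> = 2 powr (real (n + 2))" by (rule powr_realpow[symmetric]) simp
  also have "\<dots> = 2 powr (2 * (1 + real n / 2))" by (simp add: algebra_simps)
  also have "\<dots> = (2 powr (1 + real n / 2))^2"
    using powr_power[of 2 "1 + real n / 2" 2] by simp
  finally show ?thesis by (simp add: power_mono_iff abs_le_square_iff)
qed

lemma bits_lower_bound_from_counting:
  fixes L s X :: nat and a :: real
  assumes "s \<le> X" "0 \<le> a" "2^s * (1 - a) \<le> 2^L"
  shows "real s - 1 - a * real X \<le> real L"
proof (rule ccontr)
  assume "\<not> ?thesis"
  then have gap: "real L + 1 + a * X < s" by simp
  have "(2::real) powr L < 2 powr (real s - 1 - a * X)" using gap by simp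
  also have "\<dots> = 2 powr s * 2 powr (-1 - a * X)" by (simp add: powr_add[symmetric] algebra_simps)
  finally have "(2::real) ^ L < 2 ^ s * 2 powr (-1 - a * X)" by (simp add: powr_realpow)
  then have "2 ^ s * (1 - a) < 2 ^ s * 2 powr (-1 - a * X)" using assms(3) by linarith
  then have key: "1 - a < 2 powr (-1 - a * X)" by simp
  show False
  proof (cases "a \<le> 1/2")
    case True
    have "2 powr (-1 - a * X) \<le> 2 powr (-1)" using assms(2) by (intro powr_mono) auto
    then show False using key True by (simp add: powr_minus)
  next
    case False
    have "0 \<le> a * real X" "real s \<le> real X" using assms(1,2) by simp_all
    then have "1 + a * X < X" using gap by linarith
    then have X0: "X > 0" and "1 < (1 - a) * X" using \<open>0 \<le> a * real X\<close>
      by (simp_all add: algebra_simps)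
    then have "1 / real X < 1 - a" by (simp add: field_simps)
    moreover have "2 powr (-1 - a * X) \<le> 2 powr (-1 - real X / 2)"
    proof (rule powr_mono)
      have "(1/2) * real X \<le> a * real X" using False by (intro mult_right_mono) auto
      then show "-1 - a * real X \<le> -1 - real X / 2" by linarith
    qed simp
    moreover have "2 powr (-1 - real X / 2) = 1 / 2 powr (1 + real X / 2)"
      by (simp add: powr_minus_divide[symmetric] powr_minus)
    moreover have "\<dots> \<le> 1 / real X"
      using real_le_two_powr_half[of X] X0 by (intro divide_left_mono) auto
    ultimately show False using key by linarith
  qed
qed

lemma bij_betw_funs_supported_Pow:
  "bij_betw (\<lambda>g. {i. g i}) {g::'a \<Rightarrow> bool. \<forall>i. i \<notin> B \<longrightarrow> g i = False} (Pow B)"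
  by (rule bij_betw_byWitness[where f'="\<lambda>X i. i \<in> X"]) auto

lemma
  assumes "finite B"
  shows card_funs_supported: "card {g::'a \<Rightarrow> bool. \<forall>i. i \<notin> B \<longrightarrow> g i = False} = 2 ^ card B"
    and finite_funs_supported: "finite {g::'a \<Rightarrow> bool. \<forall>i. i \<notin> B \<longrightarrow> g i = False}"
  using bij_betw_same_card[OF bij_betw_funs_supported_Pow[of B]]
    bij_betw_finite[OF bij_betw_funs_supported_Pow[of B]] assms
  by (simp_all add: card_Pow)

lemma sum_of_bool_card:
  assumes "finite S"
  shows "(\<Sum>x\<in>S. of_bool (P x)::real) = real (card {x\<in>S. P x})"
  using assms by (simp add: Int_def)

lemma union_bound_card:
  assumes "finite U" and bad: "\<And>i. i < n \<Longrightarrow> real (card {w \<in> U. \<not> P i w}) \<le> eps * real (card U)"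
  shows "(1 - real n * eps) * real (card U) \<le> real (card {w \<in> U. \<forall>i<n. P i w})"
proof -
  let ?G = "{w \<in> U. \<forall>i<n. P i w}"
  have "U - ?G \<subseteq> (\<Union>i<n. {w \<in> U. \<not> P i w})" by auto
  then have "card (U - ?G) \<le> card (\<Union>i<n. {w \<in> U. \<not> P i w})"
    using assms(1) by (intro card_mono) auto
  also have "\<dots> \<le> (\<Sum>i<n. card {w \<in> U. \<not> P i w})" by (rule card_UN_le) simp
  finally have "real (card (U - ?G)) \<le> real (\<Sum>i<n. card {w \<in> U. \<not> P i w})"
    by (simp only: of_nat_le_iff)
  also have "\<dots> = (\<Sum>i<n. real (card {w \<in> U. \<not> P i w}))" by simp
  also have "\<dots> \<le> (\<Sum>i<n. eps * real (card U))" by (intro sum_mono bad) simp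
  finally have "real (card (U - ?G)) \<le> real n * eps * real (card U)" by simp
  moreover have "?G \<subseteq> U" by blast
  then have "card (U - ?G) = card U - card ?G" "card ?G \<le> card U"
    using assms(1) by (simp_all add: card_Diff_subset finite_subset card_mono)
  ultimately show ?thesis by (simp add: algebra_simps of_nat_diff)
qed

lemma card_le_by_encoding:
  assumes "inj_on h G"
    and "\<And>w. w \<in> G \<Longrightarrow> h w \<in> {xs::bool list. length xs = L} \<times> {g. \<forall>i. i \<notin> B \<longrightarrow> g i = False}"
    and "finite B"
  shows "card G \<le> 2 ^ L * 2 ^ card B"
proof -
  let ?Lists = "{xs::bool list. length xs = L}" and ?Caches = "{g. \<forall>i. i \<notin> B \<longrightarrow> g i = False}"
  have lists: "finite ?Lists" "card ?Lists = 2 ^ L"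
    using finite_lists_length_eq[of "UNIV :: bool set" L] card_lists_length_eq[of "UNIV :: bool set" L]
    by simp_all
  have "card G = card (h ` G)" using assms(1) by (simp add: card_image)
  also have "\<dots> \<le> card (?Lists \<times> ?Caches)"
    using lists(1) finite_funs_supported[OF assms(3)]
    by (intro card_mono finite_cartesian_product image_subsetI assms(2))
  also have "\<dots> = 2 ^ L * 2 ^ card B"
    by (simp only: card_cartesian_product lists(2) card_funs_supported[OF assms(3)])
  finally show ?thesis .
qed

lemma finite_bit_idx: "finite (bit_idx N F)"
  by (simp add: bit_idx_def)

lemma card_bit_idx: "card (bit_idx N F) = N * F"
  by (simp add: bit_idx_def)

lemma card_libs: "card (libs N F) = 2 ^ (N * F)"
  using card_funs_supported[OF finite_bit_idx] by (simp add: libs_def card_bit_idx)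

lemma finite_libs: "finite (libs N F)"
  using finite_funs_supported[OF finite_bit_idx] by (simp add: libs_def)

lemma libs_outside_bit_idx: "w \<in> libs N F \<Longrightarrow> x \<notin> bit_idx N F \<Longrightarrow> w x = False"
  unfolding libs_def by blast

section \<open>The genie-aided converse for a single demand\<close>

definition cachers :: "nat \<Rightarrow> (nat \<Rightarrow> (nat \<times> nat) set) \<Rightarrow> nat \<times> nat \<Rightarrow> nat set" where
  "cachers K Mc x = {k. k < K \<and> x \<in> Mc k}"

text \<open>Decoding the users \<open>us\<close> in order, every cached bit a decoder uses is either a non-genie
  bit or a bit of a file decoded before; hence the genie bits are a function of the transmission
  and the non-genie bits.\<close>
definition genie_bit :: "(nat \<Rightarrow> nat) \<Rightarrow> nat list \<Rightarrow> nat \<Rightarrow> nat set \<Rightarrow> bool" where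
  "genie_bit e us f A \<longleftrightarrow> (\<exists>i<length us. e (us!i) = f \<and> (\<forall>m\<le>i. us!m \<notin> A))"

definition genie_bits ::
  "nat \<Rightarrow> nat \<Rightarrow> nat \<Rightarrow> (nat \<Rightarrow> (nat \<times> nat) set) \<Rightarrow> (nat \<Rightarrow> nat) \<Rightarrow> nat list \<Rightarrow> (nat \<times> nat) set"
  where "genie_bits N F K Mc e us = {x \<in> bit_idx N F. genie_bit e us (fst x) (cachers K Mc x)}"

lemma card_genie_bits_le: "card (genie_bits N F K Mc e us) \<le> length us * F"
proof -
  have "genie_bits N F K Mc e us \<subseteq> (\<lambda>(i,b). (e (us!i), b)) ` ({..<length us} \<times> {..<F})"
  proof
    fix x assume "x \<in> genie_bits N F K Mc e us"
    then obtain i where "i < length us" "e (us!i) = fst x" "snd x < F"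
      by (auto simp: genie_bits_def genie_bit_def bit_idx_def)
    then show "x \<in> (\<lambda>(i,b). (e (us!i), b)) ` ({..<length us} \<times> {..<F})"
      by (intro image_eqI[where x="(i, snd x)"]) auto
  qed
  then have "card (genie_bits N F K Mc e us) \<le> card ((\<lambda>(i,b). (e (us!i), b)) ` ({..<length us} \<times> {..<F}))"
    by (intro card_mono) auto
  also have "\<dots> \<le> length us * F" by (rule card_image_le[THEN order_trans]) auto
  finally show ?thesis .
qed

lemma genie_bits_determined:
  assumes us: "set us \<subseteq> {..<K}"
    and w: "w \<in> libs N F" "w' \<in> libs N F"
    and outside: "\<And>x. x \<notin> genie_bits N F K Mc e us \<Longrightarrow> w x = w' x"
    and decode: "\<And>i j. i < length us \<Longrightarrow> j < F \<Longrightarrow>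
      cached (Mc (us!i)) w = cached (Mc (us!i)) w' \<Longrightarrow> w (e (us!i), j) = w' (e (us!i), j)"
  shows "w = w'"
proof -
  have decoded: "\<forall>m<i. \<forall>j. w (e (us!m), j) = w' (e (us!m), j)" if "i \<le> length us" for i
    using that
  proof (induction i)
    case 0 then show ?case by simp
  next
    case (Suc i)
    then have IH: "\<forall>m<i. \<forall>j. w (e (us!m), j) = w' (e (us!m), j)" and i: "i < length us" by auto
    have "us!i < K" using i us nth_mem by blast
    have same_cache: "cached (Mc (us!i)) w = cached (Mc (us!i)) w'"
    proof
      fix x show "cached (Mc (us!i)) w x = cached (Mc (us!i)) w' x"
      proof (cases "x \<in> Mc (us!i) \<and> x \<in> genie_bits N F K Mc e us")
        case True
        then obtain i' where i': "e (us!i') = fst x" "\<forall>m\<le>i'. us!m \<notin> cachers K Mc x"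
          by (auto simp: genie_bits_def genie_bit_def)
        have "us!i \<in> cachers K Mc x" using \<open>us!i < K\<close> True by (simp add: cachers_def)
        then have "i' < i" using i'(2) by (meson not_le)
        then have "w (e (us!i'), snd x) = w' (e (us!i'), snd x)" using IH by blast
        then show ?thesis using i'(1) by (simp add: cached_def prod_eq_iff)
      qed (auto simp: cached_def outside)
    qed
    have "w (e (us!i), j) = w' (e (us!i), j)" for j
    proof (cases "j < F")
      case False
      then have "(e (us!i), j) \<notin> bit_idx N F" by (simp add: bit_idx_def)
      then show ?thesis using libs_outside_bit_idx w by metis
    qed (use decode i same_cache in blast)
    then show ?case using IH less_Suc_eq by auto
  qed
  show "w = w'"
  proof
    fix x show "w x = w' x"
    proof (cases "x \<in> genie_bits N F K Mc e us")
      case True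
      then obtain i where "i < length us" "e (us!i) = fst x"
        by (auto simp: genie_bits_def genie_bit_def)
      then have "w (e (us!i), snd x) = w' (e (us!i), snd x)" using decoded[of "length us"] by blast
      then show ?thesis using \<open>e (us!i) = fst x\<close> by (cases x) simp
    qed (rule outside)
  qed
qed

lemma inj_on_transmission_non_genie_bits:
  assumes us: "set us \<subseteq> {..<K}" and G: "G \<subseteq> libs N F"
    and decodes: "\<And>w i j. w \<in> G \<Longrightarrow> i < length us \<Longrightarrow> j < F \<Longrightarrow>
      dec (us!i) (psi w) (cached (Mc (us!i)) w) j = w (e (us!i), j)"
  shows "inj_on (\<lambda>w. (psi w, cached (bit_idx N F - genie_bits N F K Mc e us) w)) G"
proof
  let ?R = "bit_idx N F - genie_bits N F K Mc e us"
  fix w w' assume w: "w \<in> G" "w' \<in> G"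
    and "(psi w, cached ?R w) = (psi w', cached ?R w')"
  then have same: "psi w = psi w'" "cached ?R w = cached ?R w'" by simp_all
  have wl: "w \<in> libs N F" "w' \<in> libs N F" using w G by auto
  show "w = w'"
  proof (rule genie_bits_determined[OF us wl])
    fix x assume "x \<notin> genie_bits N F K Mc e us"
    moreover have "cached ?R w x = cached ?R w' x" using same(2) by simp
    ultimately show "w x = w' x" using libs_outside_bit_idx[OF wl(1)] libs_outside_bit_idx[OF wl(2)]
      by (cases "x \<in> bit_idx N F") (simp_all add: cached_def)
  next
    fix i j assume "i < length us" "j < F" "cached (Mc (us!i)) w = cached (Mc (us!i)) w'"
    then show "w (e (us!i), j) = w' (e (us!i), j)"
      using decodes[OF w(1)] decodes[OF w(2)] same(1) by metis
  qed
qed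

lemma genie_counting_bound:
  assumes us: "set us \<subseteq> {..<K}" "\<forall>u\<in>set us. e u \<noteq> 0"
    and ach: "achievable N K F eps e Mc L"
  shows "2 ^ card (genie_bits N F K Mc e us) * (1 - real (length us) * eps) \<le> 2 ^ L"
proof -
  obtain psi dec where len: "\<forall>w\<in>libs N F. length (psi w) = L"
    and err: "\<forall>k<K. e k \<noteq> 0 \<longrightarrow> err_prob N F (Mc k) (e k) psi (dec k) \<le> eps"
    using ach unfolding achievable_def by blast
  define n where "n = length us"
  define T where "T = bit_idx N F"
  define S where "S = genie_bits N F K Mc e us"
  define ok where "ok i w \<longleftrightarrow> (\<forall>j<F. dec (us!i) (psi w) (cached (Mc (us!i)) w) j = w (e (us!i), j))"
    for i w
  define G where "G = {w \<in> libs N F. \<forall>i<n. ok i w}"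
  have clibs: "real (card (libs N F)) = 2 ^ card T" by (simp add: card_libs T_def card_bit_idx)
  have "(1 - real n * eps) * real (card (libs N F)) \<le> real (card G)"
    unfolding G_def
  proof (rule union_bound_card[OF finite_libs])
    fix i assume "i < n"
    then have "us!i < K" "e (us!i) \<noteq> 0" using us n_def nth_mem by blast+
    then have "err_prob N F (Mc (us!i)) (e (us!i)) psi (dec (us!i)) \<le> eps" using err by blast
    then show "real (card {w \<in> libs N F. \<not> ok i w}) \<le> eps * real (card (libs N F))"
      by (simp add: err_prob_def ok_def divide_le_eq clibs)
  qed
  moreover have "card G \<le> 2 ^ L * 2 ^ card (T - S)"
  proof (rule card_le_by_encoding)
    show "inj_on (\<lambda>w. (psi w, cached (T - S) w)) G" unfolding T_def S_def
    proof (rule inj_on_transmission_non_genie_bits[OF us(1), where dec = dec])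
      show "G \<subseteq> libs N F" by (auto simp: G_def)
    qed (simp add: G_def ok_def n_def)
    show "(psi w, cached (T - S) w) \<in> {xs. length xs = L} \<times> {g. \<forall>i. i \<notin> T - S \<longrightarrow> g i = False}"
      if "w \<in> G" for w
      using len that by (auto simp: G_def cached_def)
  qed (simp add: T_def finite_bit_idx)
  then have "real (card G) \<le> real (2 ^ L * 2 ^ card (T - S))" by (simp only: of_nat_le_iff)
  ultimately have "(1 - real n * eps) * 2 ^ card T \<le> 2 ^ L * 2 ^ card (T - S)"
    by (simp add: clibs)
  moreover have "card T = card (T - S) + card S"
    using card_Diff_subset[of S T] card_mono[of T S]
    by (simp add: T_def S_def genie_bits_def finite_bit_idx)
  ultimately have "2 ^ card (T - S) * (2 ^ card S * (1 - real n * eps)) \<le> 2 ^ card (T - S) * 2 ^ L"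
    by (simp add: power_add algebra_simps)
  then show ?thesis by (simp add: S_def n_def)
qed

text \<open>Sending the whole library shows that the infimum defining \<open>opt_rate_d\<close> is taken over a
  nonempty set.\<close>
lemma achievable_whole_library:
  assumes "e \<in> gen_demands N K" "eps \<ge> 0"
  shows "achievable N K F eps e Mc (N * F)"
proof -
  define psi where "psi w = map (\<lambda>i. w (i div F + 1, i mod F)) [0..<N*F]" for w :: "nat \<times> nat \<Rightarrow> bool"
  define dec where "dec k (xs::bool list) (c::nat \<times> nat \<Rightarrow> bool) j = xs ! ((e k - 1) * F + j)" for k xs c j
  have decodes: "dec k (psi w) c j = w (e k, j)" if "k < K" "e k \<noteq> 0" "j < F" for k w c j
  proof -
    have "e k \<le> N" using assms(1) that(1) by (simp add: gen_demands_def)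
    have "(e k - 1) * F + j < (e k - 1) * F + F" using that(3) by simp
    also have "\<dots> = e k * F" using that(2) by (cases "e k") auto
    also have "\<dots> \<le> N * F" using \<open>e k \<le> N\<close> by simp
    finally have "(e k - 1) * F + j < N * F" .
    moreover have "((e k - 1) * F + j) div F = e k - 1" "((e k - 1) * F + j) mod F = j"
      using that(3) by auto
    ultimately show ?thesis using that(2) by (simp add: dec_def psi_def)
  qed
  have "err_prob N F (Mc k) (e k) psi (dec k) = 0" if "k < K" "e k \<noteq> 0" for k
    using decodes[OF that] by (simp add: err_prob_def)
  then show ?thesis
    using assms(2) unfolding achievable_def by (intro exI[of _ psi] exI[of _ dec]) (simp add: psi_def)
qed

lemma opt_rate_d_ge_genie_bits:
  assumes e: "e \<in> gen_demands N K"
    and us: "set us \<subseteq> {..<K}" "\<forall>u\<in>set us. e u \<noteq> 0"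
    and eps: "eps > 0" and F: "F \<ge> 1"
  shows "(real (card (genie_bits N F K Mc e us)) - 1) / real F - real (length us)^2 * eps
     \<le> opt_rate_d N K F eps e Mc"
  unfolding opt_rate_d_def
proof (rule cInf_greatest)
  show "{real L / real F | L. achievable N K F eps e Mc L} \<noteq> {}"
    using achievable_whole_library[OF e, of eps F Mc] eps by auto
next
  let ?S = "card (genie_bits N F K Mc e us)" and ?n = "length us"
  fix y assume "y \<in> {real L / real F | L. achievable N K F eps e Mc L}"
  then obtain L where y: "y = real L / real F" and "achievable N K F eps e Mc L" by blast
  then have "2 ^ ?S * (1 - real ?n * eps) \<le> 2 ^ L" using genie_counting_bound[OF us] by blast
  then have "real ?S - 1 - (real ?n * eps) * real (?n * F) \<le> real L"
    using eps by (intro bits_lower_bound_from_counting card_genie_bits_le) auto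
  then have "(real ?S - 1 - real ?n ^ 2 * eps * real F) / real F \<le> real L / real F"
    using F by (intro divide_right_mono) (auto simp: power2_eq_square algebra_simps)
  then show "(real ?S - 1) / real F - real ?n ^ 2 * eps \<le> y"
    using F by (simp add: y diff_divide_distrib)
qed

lemma finite_gen_demands: "finite (gen_demands N K)"
proof -
  have inj: "inj_on (\<lambda>d. map d [0..<K]) (gen_demands N K)"
  proof
    fix d d' assume d: "d \<in> gen_demands N K" and d': "d' \<in> gen_demands N K"
      and eq: "map d [0..<K] = map d' [0..<K]"
    show "d = d'"
    proof
      fix k show "d k = d' k"
      proof (cases "k < K")
        case True then show ?thesis using eq by (metis map_eq_conv atLeastLessThan_iff set_upt zero_le)
      next
        case False then show ?thesis using d d' by (simp add: gen_demands_def)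
      qed
    qed
  qed
  have "(\<lambda>d. map d [0..<K]) ` gen_demands N K \<subseteq> {xs. set xs \<subseteq> {..N} \<and> length xs = K}"
    by (auto simp: gen_demands_def)
  moreover have "finite {xs. set xs \<subseteq> {..N} \<and> length xs = K}" by (rule finite_lists_length_eq) simp
  ultimately have "finite ((\<lambda>d. map d [0..<K]) ` gen_demands N K)" by (rule finite_subset)
  then show ?thesis using inj by (rule finite_imageD)
qed

lemma finite_demand_type: "finite (demand_type N K s)"
  by (rule finite_subset[OF _ finite_gen_demands]) (auto simp: demand_type_def)

text \<open>For \<open>n = N_e s\<close> these are the orderings of the genie argument: one requester for each
  requested file.\<close>
definition request_lists :: "nat \<Rightarrow> nat \<Rightarrow> (nat \<Rightarrow> nat) \<Rightarrow> nat list set" where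
  "request_lists K n e =
    {us. length us = n \<and> set us \<subseteq> {..<K} \<and> (\<forall>u\<in>set us. e u \<noteq> 0) \<and> distinct (map e us)}"

lemma finite_request_lists: "finite (request_lists K n e)"
proof (rule finite_subset)
  show "request_lists K n e \<subseteq> {us. set us \<subseteq> {..<K} \<and> length us = n}" by (auto simp: request_lists_def)
  show "finite {us. set us \<subseteq> {..<K} \<and> length us = n}" by (rule finite_lists_length_eq) simp
qed

lemma N_e_demand_stats:
  "N_e (demand_stats N K e) = card {f \<in> {1..N}. \<exists>k<K. e k = f}"
proof -
  define g where "g n = card {k. k < K \<and> e k = n}" for n
  have gpos: "g n > 0 \<longleftrightarrow> (\<exists>k<K. e k = n)" for n
    by (auto simp: g_def card_gt_0_iff)
  have "N_e (demand_stats N K e) = length (filter (\<lambda>x. x > 0) (rev (sort (map g [1..<N+1]))))"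
  proof -
    have gg: "(\<lambda>n. card {k. k < K \<and> e k = n}) = g" by (simp add: g_def fun_eq_iff)
    show ?thesis by (simp only: N_e_def demand_stats_def gg)
  qed
  also have "\<dots> = length (filter (\<lambda>x. x > 0) (map g [1..<N+1]))"
  proof -
    have "mset (filter (\<lambda>x. x > 0) (rev (sort (map g [1..<N+1])))) = mset (filter (\<lambda>x. x > 0) (map g [1..<N+1]))"
      by (simp add: mset_filter)
    then show ?thesis by (metis size_mset)
  qed
  also have "\<dots> = length (filter (\<lambda>n. g n > 0) [1..<N+1])" by (simp add: filter_map comp_def)
  also have "\<dots> = card ({n. g n > 0} \<inter> set [1..<N+1])" by (rule distinct_length_filter) simp
  also have "{n. g n > 0} \<inter> set [1..<N+1] = {f \<in> {1..N}. \<exists>k<K. e k = f}" using gpos by auto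
  finally show ?thesis .
qed

lemma request_lists_N_e_nonempty:
  assumes e: "e \<in> demand_type N K s"
  shows "request_lists K (N_e s) e \<noteq> {}"
proof -
  define R where "R = {f \<in> {1..N}. \<exists>k<K. e k = f}"
  have Ns: "N_e s = card R" using e N_e_demand_stats[of N K e] by (simp add: demand_type_def R_def)
  have fR: "finite R" by (simp add: R_def)
  define fs where "fs = sorted_list_of_set R"
  have fs: "set fs = R" "distinct fs" "length fs = card R" using fR by (auto simp: fs_def)
  define pick where "pick f = (SOME k. k < K \<and> e k = f)" for f
  have pk: "pick f < K \<and> e (pick f) = f" if "f \<in> R" for f
  proof -
    have "\<exists>k. k < K \<and> e k = f" using that by (auto simp: R_def)
    from someI_ex[OF this] show ?thesis by (simp add: pick_def)
  qed
  define us where "us = map pick fs"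
  have me: "map e us = fs" unfolding us_def map_map
    by (rule map_idI) (use pk fs(1) in auto)
  have "us \<in> request_lists K (N_e s) e" unfolding request_lists_def
  proof (intro CollectI conjI ballI)
    show "length us = N_e s" using fs Ns by (simp add: us_def)
    show "set us \<subseteq> {..<K}" using pk fs(1) by (auto simp: us_def)
    show "distinct (map e us)" using me fs by simp
    fix u assume "u \<in> set us"
    then obtain f where "f \<in> R" "u = pick f" using fs(1) by (auto simp: us_def)
    then show "e u \<noteq> 0" using pk by (auto simp: R_def)
  qed
  then show ?thesis by blast
qed

lemma N_e_le_users:
  assumes e: "e \<in> demand_type N K s"
  shows "N_e s \<le> K"
proof -
  obtain us where us: "us \<in> request_lists K (N_e s) e" using request_lists_N_e_nonempty[OF e] by blast
  then have "distinct us" "set us \<subseteq> {..<K}" "length us = N_e s"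
    by (auto simp: request_lists_def distinct_map)
  then show ?thesis using card_mono[of "{..<K}" "set us"] distinct_card by fastforce
qed

section \<open>Relabelling files and users\<close>

lemma mset_map_comp_permutes:
  assumes "p permutes set xs" "distinct xs"
  shows "mset (map (g \<circ> p) xs) = mset (map g xs)"
proof -
  have "mset (map p xs) = mset xs"
  proof -
    have "distinct (map p xs)" using assms permutes_inj_on[OF assms(1)]
      by (simp add: distinct_map inj_on_subset)
    moreover have "set (map p xs) = set xs" using permutes_image[OF assms(1)] by simp
    ultimately show ?thesis using set_eq_iff_mset_eq_distinct assms(2) by blast
  qed
  then have "mset (map g (map p xs)) = mset (map g xs)" by (metis mset_map)
  then show ?thesis by simp
qed

lemma permutes_file_indices:
  assumes "p permutes {1..(N::nat)}"
  shows "p 0 = 0" and "p x = 0 \<longleftrightarrow> x = 0" and "p x \<le> N \<longleftrightarrow> x \<le> N"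
proof -
  show p0: "p 0 = 0" using permutes_not_in[OF assms] by simp
  show "p x = 0 \<longleftrightarrow> x = 0" using p0 permutes_inj[OF assms] by (metis injD)
  have "p x \<in> {1..N} \<longleftrightarrow> x \<in> {1..N}" by (rule permutes_in_image[OF assms])
  then show "p x \<le> N \<longleftrightarrow> x \<le> N" using p0 \<open>p x = 0 \<longleftrightarrow> x = 0\<close>
    by (cases "x = 0") auto
qed

definition relabel_demand :: "(nat \<Rightarrow> nat) \<Rightarrow> (nat \<Rightarrow> nat) \<Rightarrow> (nat \<Rightarrow> nat) \<Rightarrow> (nat \<Rightarrow> nat)" where
  "relabel_demand pm sg e = pm \<circ> e \<circ> inv sg"

lemma relabel_demand_apply: "sg permutes S \<Longrightarrow> relabel_demand pm sg e (sg u) = pm (e u)"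
  by (simp add: relabel_demand_def permutes_inverses)

lemma relabel_demand_inv:
  assumes pm: "pm permutes {1..N}" and sg: "sg permutes {..<K}"
  shows "relabel_demand (inv pm) (inv sg) (relabel_demand pm sg e) = e"
proof
  fix k
  have "inv (inv sg) = sg" by (rule inv_inv_eq[OF permutes_bij[OF sg]])
  then show "relabel_demand (inv pm) (inv sg) (relabel_demand pm sg e) k = e k"
    by (simp add: relabel_demand_def permutes_inverses[OF pm] permutes_inverses[OF sg])
qed

lemma relabel_demand_gen_demands:
  assumes pm: "pm permutes {1..N}" and sg: "sg permutes {..<K}" and e: "e \<in> gen_demands N K"
  shows "relabel_demand pm sg e \<in> gen_demands N K"
proof -
  have "relabel_demand pm sg e k \<le> N" if "k < K" for k
  proof -
    have "inv sg k < K" using permutes_in_image[OF permutes_inv[OF sg]] that by simp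
    then have "e (inv sg k) \<le> N" using e by (simp add: gen_demands_def)
    then show ?thesis using permutes_file_indices(3)[OF pm] by (simp add: relabel_demand_def)
  qed
  moreover have "relabel_demand pm sg e k = 0" if "k \<ge> K" for k
  proof -
    have "inv sg k = k" using permutes_not_in[OF permutes_inv[OF sg]] that by simp
    then show ?thesis using e that permutes_file_indices(1)[OF pm] by (simp add: relabel_demand_def gen_demands_def)
  qed
  ultimately show ?thesis by (simp add: gen_demands_def)
qed

lemma demand_stats_relabel_demand:
  assumes pm: "pm permutes {1..N}" and sg: "sg permutes {..<K}"
  shows "demand_stats N K (relabel_demand pm sg e) = demand_stats N K e"
proof -
  define g where "g n = card {k. k < K \<and> e k = n}" for n
  have cnt: "card {k. k < K \<and> relabel_demand pm sg e k = n} = g (inv pm n)" for n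
  proof -
    have "{k. k < K \<and> relabel_demand pm sg e k = n} = sg ` {k. k < K \<and> e k = inv pm n}"
    proof (intro set_eqI iffI)
      fix k assume "k \<in> {k. k < K \<and> relabel_demand pm sg e k = n}"
      then have k: "k < K" "pm (e (inv sg k)) = n" by (auto simp: relabel_demand_def)
      have "inv sg k < K" using permutes_in_image[OF permutes_inv[OF sg]] k by simp
      moreover have "e (inv sg k) = inv pm n" using k(2) permutes_inv_eq[OF pm] by metis
      moreover have "k = sg (inv sg k)" using permutes_inverses[OF sg] by simp
      ultimately show "k \<in> sg ` {k. k < K \<and> e k = inv pm n}" by blast
    next
      fix k assume "k \<in> sg ` {k. k < K \<and> e k = inv pm n}"
      then obtain j where j: "j < K" "e j = inv pm n" "k = sg j" by auto
      have "sg j < K" using permutes_in_image[OF sg] j by simp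
      moreover have "inv sg k = j" using j(3) permutes_inverses[OF sg] by simp
      moreover have "pm (inv pm n) = n" using permutes_inverses[OF pm] by simp
      ultimately show "k \<in> {k. k < K \<and> relabel_demand pm sg e k = n}" using j by (simp add: relabel_demand_def)
    qed
    then show ?thesis using permutes_inj_on[OF sg] by (simp add: card_image g_def)
  qed
  have "map (\<lambda>n. card {k. k < K \<and> relabel_demand pm sg e k = n}) [1..<N+1] = map (g \<circ> inv pm) [1..<N+1]"
    using cnt by simp
  moreover have "mset (map (g \<circ> inv pm) [1..<N+1]) = mset (map g [1..<N+1])"
  proof (rule mset_map_comp_permutes)
    have "set [1..<Suc N] = {1..N}" by (simp only: set_upt atLeastLessThanSuc_atLeastAtMost)
    then have "set [1..<N+1] = {1..N}" by simp
    then show "inv pm permutes set [1..<N+1]" using permutes_inv[OF pm] by simp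
  qed simp
  ultimately have "sort (map (\<lambda>n. card {k. k < K \<and> relabel_demand pm sg e k = n}) [1..<N+1]) = sort (map g [1..<N+1])"
    by (intro properties_for_sort) (simp_all only: mset_sort sorted_sort)
  moreover have gg: "g = (\<lambda>n. card {k. k < K \<and> e k = n})" using g_def by (intro ext) simp
  ultimately show ?thesis unfolding demand_stats_def by (simp only:)
qed

lemma relabel_demand_demand_type:
  assumes pm: "pm permutes {1..N}" and sg: "sg permutes {..<K}" and e: "e \<in> demand_type N K s"
  shows "relabel_demand pm sg e \<in> demand_type N K s"
  using relabel_demand_gen_demands[OF pm sg] demand_stats_relabel_demand[OF pm sg] e by (auto simp: demand_type_def)

lemma inj_relabel_demand:
  assumes pm: "pm permutes {1..N}" and sg: "sg permutes {..<K}"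
  shows "inj (relabel_demand pm sg)"
proof
  fix e e' assume "relabel_demand pm sg e = relabel_demand pm sg e'"
  then have "pm (e (inv sg x)) = pm (e' (inv sg x))" for x unfolding relabel_demand_def comp_def by meson
  then have "e (inv sg x) = e' (inv sg x)" for x using permutes_inj[OF pm] injD by fastforce
  then have "e (inv sg (sg x)) = e' (inv sg (sg x))" for x by blast
  then show "e = e'" using permutes_inverses(2)[OF sg] by auto
qed

lemma relabel_demand_image_demand_type:
  assumes pm: "pm permutes {1..N}" and sg: "sg permutes {..<K}"
  shows "relabel_demand pm sg ` demand_type N K s = demand_type N K s"
proof (rule endo_inj_surj[OF finite_demand_type])
  show "relabel_demand pm sg ` demand_type N K s \<subseteq> demand_type N K s" using relabel_demand_demand_type[OF pm sg] by blast
  show "inj_on (relabel_demand pm sg) (demand_type N K s)" using inj_relabel_demand[OF pm sg] by (rule inj_on_subset) simp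
qed

lemma map_permutes_request_lists:
  assumes pm: "pm permutes {1..N}" and sg: "sg permutes {..<K}" and us: "us \<in> request_lists K n e"
  shows "map sg us \<in> request_lists K n (relabel_demand pm sg e)"
  unfolding request_lists_def
proof (intro CollectI conjI ballI)
  have apply_sg: "relabel_demand pm sg e (sg u) = pm (e u)" for u by (rule relabel_demand_apply[OF sg])
  show "length (map sg us) = n" "set (map sg us) \<subseteq> {..<K}"
    using us permutes_in_image[OF sg] by (auto simp: request_lists_def)
  show "relabel_demand pm sg e u \<noteq> 0" if "u \<in> set (map sg us)" for u
  proof -
    obtain v where v: "v \<in> set us" "u = sg v" using \<open>u \<in> set (map sg us)\<close> by auto
    then have "e v \<noteq> 0" using us by (simp add: request_lists_def)
    then show ?thesis using v(2) apply_sg permutes_file_indices(2)[OF pm] by simp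
  qed
  have "distinct (map e us)" using us by (simp add: request_lists_def)
  moreover have "inj_on pm (set (map e us))" using permutes_inj_on[OF pm] by blast
  ultimately have "distinct (map pm (map e us))" by (simp only: distinct_map)
  moreover have "map (relabel_demand pm sg e) (map sg us) = map pm (map e us)" by (simp add: apply_sg)
  ultimately show "distinct (map (relabel_demand pm sg e) (map sg us))" by (simp only:)
qed

lemma request_lists_relabel_demand:
  assumes pm: "pm permutes {1..N}" and sg: "sg permutes {..<K}"
  shows "request_lists K n (relabel_demand pm sg e) = map sg ` request_lists K n e"
proof
  show "map sg ` request_lists K n e \<subseteq> request_lists K n (relabel_demand pm sg e)"
    by (auto intro: map_permutes_request_lists[OF pm sg])
  show "request_lists K n (relabel_demand pm sg e) \<subseteq> map sg ` request_lists K n e"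
  proof
    fix us assume "us \<in> request_lists K n (relabel_demand pm sg e)"
    then have "map (inv sg) us
        \<in> request_lists K n (relabel_demand (inv pm) (inv sg) (relabel_demand pm sg e))"
      by (rule map_permutes_request_lists[OF permutes_inv[OF pm] permutes_inv[OF sg]])
    then have "map (inv sg) us \<in> request_lists K n e" by (simp only: relabel_demand_inv[OF pm sg])
    moreover have "us = map sg (map (inv sg) us)" by (simp add: comp_def permutes_inverses(1)[OF sg])
    ultimately show "us \<in> map sg ` request_lists K n e" by blast
  qed
qed

lemma inj_map_permutes: "sg permutes S \<Longrightarrow> inj (map sg)"
  using permutes_inj by (blast intro: inj_mapI)

lemma card_request_lists_relabel_demand:
  assumes pm: "pm permutes {1..N}" and sg: "sg permutes {..<K}"
  shows "card (request_lists K n (relabel_demand pm sg e)) = card (request_lists K n e)"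
  unfolding request_lists_relabel_demand[OF pm sg]
  by (rule card_image) (rule inj_on_subset[OF inj_map_permutes[OF sg]], simp)

lemma genie_bit_bounded_iff:
  "genie_bit e us f A \<longleftrightarrow> (\<exists>i<length us. e (us!i) = f \<and> (\<forall>m<length us. m \<le> i \<longrightarrow> us!m \<notin> A))"
  unfolding genie_bit_def by (auto intro: le_less_trans)

lemma genie_bit_relabel_demand:
  assumes pm: "pm permutes {1..N}" and sg: "sg permutes {..<K}"
  shows "genie_bit (relabel_demand pm sg e) (map sg us) (pm f) (sg ` A) \<longleftrightarrow> genie_bit e us f A"
proof -
  have ap: "relabel_demand pm sg e (sg u) = pm (e u)" for u by (rule relabel_demand_apply[OF sg])
  have "(pm (e (us!i)) = pm f) \<longleftrightarrow> e (us!i) = f" for i using permutes_inj[OF pm] by (auto dest: injD)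
  moreover have "(sg x \<in> sg ` A) \<longleftrightarrow> x \<in> A" for x using permutes_inj[OF sg] by (auto dest: injD)
  ultimately show ?thesis unfolding genie_bit_bounded_iff by (simp add: ap cong: conj_cong)
qed

definition genie_weight :: "nat \<Rightarrow> nat \<Rightarrow> nat list \<Rightarrow> nat \<Rightarrow> nat \<Rightarrow> nat set \<Rightarrow> real" where
  "genie_weight N K s n f A = (\<Sum>e\<in>demand_type N K s. \<Sum>us\<in>request_lists K n e.
      of_bool (genie_bit e us f A) / real (card (request_lists K n e)))"

lemma genie_weight_relabel:
  assumes pm: "pm permutes {1..N}" and sg: "sg permutes {..<K}"
  shows "genie_weight N K s n (pm f) (sg ` A) = genie_weight N K s n f A"
proof -
  let ?D = "demand_type N K s"
  let ?G = "\<lambda>e. \<Sum>us\<in>request_lists K n e. of_bool (genie_bit e us (pm f) (sg ` A)) / real (card (request_lists K n e))"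
  have "genie_weight N K s n (pm f) (sg ` A) = sum ?G (relabel_demand pm sg ` ?D)"
    unfolding genie_weight_def relabel_demand_image_demand_type[OF pm sg] ..
  also have "\<dots> = sum (?G \<circ> relabel_demand pm sg) ?D"
    by (rule sum.reindex) (rule inj_on_subset[OF inj_relabel_demand[OF pm sg]], simp)
  also have "\<dots> = (\<Sum>e\<in>?D. \<Sum>us\<in>request_lists K n e. of_bool (genie_bit e us f A) / real (card (request_lists K n e)))"
  proof (rule sum.cong[OF refl])
    fix e
    have "(?G \<circ> relabel_demand pm sg) e = (\<Sum>us\<in>map sg ` request_lists K n e.
        of_bool (genie_bit (relabel_demand pm sg e) us (pm f) (sg ` A)) / real (card (request_lists K n e)))"
      by (simp only: comp_def card_request_lists_relabel_demand[OF pm sg]) (simp only: request_lists_relabel_demand[OF pm sg])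
    also have "\<dots> = (\<Sum>us\<in>request_lists K n e.
        of_bool (genie_bit (relabel_demand pm sg e) (map sg us) (pm f) (sg ` A)) / real (card (request_lists K n e)))"
      by (subst sum.reindex) (auto intro: inj_on_subset[OF inj_map_permutes[OF sg]])
    also have "\<dots> = (\<Sum>us\<in>request_lists K n e. of_bool (genie_bit e us f A) / real (card (request_lists K n e)))"
      by (simp only: genie_bit_relabel_demand[OF pm sg])
    finally show "(?G \<circ> relabel_demand pm sg) e
        = (\<Sum>us\<in>request_lists K n e. of_bool (genie_bit e us f A) / real (card (request_lists K n e)))" .
  qed
  also have "\<dots> = genie_weight N K s n f A" by (simp add: genie_weight_def)
  finally show ?thesis .
qed

lemma exists_permutes_image:
  assumes "finite S" "A \<subseteq> S" "B \<subseteq> S" "card A = card B"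
  shows "\<exists>sg. sg permutes S \<and> sg ` A = B"
proof -
  have fA: "finite A" "finite B" using assms finite_subset by auto
  obtain h where h: "bij_betw h A B" using finite_same_card_bij[OF fA assms(4)] by blast
  have "card (S - A) = card (S - B)"
    using assms fA by (simp add: card_Diff_subset)
  then obtain h' where h': "bij_betw h' (S - A) (S - B)"
    using finite_same_card_bij assms(1) by blast
  define sg where "sg x = (if x \<in> A then h x else if x \<in> S then h' x else x)" for x
  have b1: "bij_betw sg A B" using h by (rule bij_betw_cong[THEN iffD1, rotated]) (simp add: sg_def)
  have b2: "bij_betw sg (S - A) (S - B)" using h' by (rule bij_betw_cong[THEN iffD1, rotated]) (simp add: sg_def)
  have "bij_betw sg (A \<union> (S - A)) (B \<union> (S - B))" by (rule bij_betw_combine[OF b1 b2]) auto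
  moreover have "A \<union> (S - A) = S" "B \<union> (S - B) = S" using assms by auto
  ultimately have "bij_betw sg S S" by simp
  then have "sg permutes S" by (rule bij_imp_permutes) (use assms(2) in \<open>auto simp: sg_def\<close>)
  moreover have "sg ` A = B" using b1 by (simp add: bij_betw_def)
  ultimately show ?thesis by blast
qed

lemma genie_weight_canonical:
  assumes "f \<in> {1..N}" "A \<subseteq> {..<K}"
  shows "genie_weight N K s n f A = genie_weight N K s n 1 {..<card A}"
proof -
  have N: "1 \<in> {1..N}" using assms(1) by auto
  let ?pm = "Transposition.transpose 1 f"
  have pm: "?pm permutes {1..N}" by (rule permutes_swap_id[OF N assms(1)])
  have cA: "card A \<le> K" using assms(2) card_mono[of "{..<K}" A] by simp
  obtain sg where sg: "sg permutes {..<K}" "sg ` {..<card A} = A"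
    using exists_permutes_image[of "{..<K}" "{..<card A}" A] assms(2) cA by auto
  have "genie_weight N K s n (?pm 1) (sg ` {..<card A}) = genie_weight N K s n 1 {..<card A}"
    by (rule genie_weight_relabel[OF pm sg(1)])
  then show ?thesis using sg(2) by simp
qed

section \<open>Averaging over a demand type\<close>

lemma sum_choose_hockey_stick:
  assumes "n \<le> K"
  shows "(\<Sum>i<n. K - Suc i choose j) + (K - n choose Suc j) = K choose Suc j"
  using assms
proof (induction n)
  case 0 then show ?case by simp
next
  case (Suc n)
  have "K - n = Suc (K - Suc n)" using Suc.prems by simp
  then have "K - n choose Suc j = (K - Suc n choose j) + (K - Suc n choose Suc j)" by simp
  then show ?case using Suc by simp
qed

definition user_subsets :: "nat \<Rightarrow> nat \<Rightarrow> nat set set" where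
  "user_subsets K j = {A. A \<subseteq> {..<K} \<and> card A = j}"

lemma finite_user_subsets: "finite (user_subsets K j)"
  by (rule finite_subset[of _ "Pow {..<K}"]) (auto simp: user_subsets_def)

lemma card_user_subsets: "card (user_subsets K j) = K choose j"
  using n_subsets[of "{..<K}" j] by (simp add: user_subsets_def)

lemma card_genie_files:
  assumes e: "e \<in> gen_demands N K" and us: "us \<in> request_lists K n e"
  shows "card {f \<in> {1..N}. genie_bit e us f A} = card {i \<in> {..<n}. \<forall>m\<le>i. us!m \<notin> A}"
proof -
  have len: "length us = n" and uK: "set us \<subseteq> {..<K}" and nz: "\<forall>u\<in>set us. e u \<noteq> 0"
    and dist: "distinct (map e us)" using us by (auto simp: request_lists_def)
  let ?I = "{i \<in> {..<n}. \<forall>m\<le>i. us!m \<notin> A}"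
  have "{f \<in> {1..N}. genie_bit e us f A} = (\<lambda>i. e (us!i)) ` ?I"
  proof (intro set_eqI iffI)
    fix f assume "f \<in> {f \<in> {1..N}. genie_bit e us f A}"
    then show "f \<in> (\<lambda>i. e (us!i)) ` ?I" by (auto simp: genie_bit_def len)
  next
    fix f assume "f \<in> (\<lambda>i. e (us!i)) ` ?I"
    then obtain i where i: "i < n" "\<forall>m\<le>i. us!m \<notin> A" "f = e (us!i)" by auto
    then have "us!i \<in> set us" using len by simp
    then have "e (us!i) \<noteq> 0" "e (us!i) \<le> N" using nz uK e by (auto simp: gen_demands_def)
    then show "f \<in> {f \<in> {1..N}. genie_bit e us f A}" using i len by (auto simp: genie_bit_def)
  qed
  moreover have "inj_on (\<lambda>i. e (us!i)) ?I"
    using inj_on_nth[OF dist, of ?I] by (simp add: inj_on_def len)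
  ultimately show ?thesis by (simp add: card_image)
qed

lemma card_user_subsets_avoiding_prefix:
  assumes "set us \<subseteq> {..<K}" "distinct us" "i < length us"
  shows "card {A \<in> user_subsets K j. \<forall>m\<le>i. us!m \<notin> A} = (K - Suc i) choose j"
proof -
  let ?T = "(!) us ` {..i}"
  have "card ?T = Suc i" using assms(2,3) by (simp add: card_image inj_on_nth)
  moreover have "?T \<subseteq> {..<K}"
  proof (rule image_subsetI)
    fix m assume "m \<in> {..i}"
    then have "us!m \<in> set us" using assms(3) by simp
    then show "us!m \<in> {..<K}" using assms(1) by blast
  qed
  ultimately have "card ({..<K} - ?T) = K - Suc i" by (simp add: card_Diff_subset)
  moreover have "{A \<in> user_subsets K j. \<forall>m\<le>i. us!m \<notin> A} = {B. B \<subseteq> {..<K} - ?T \<and> card B = j}"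
    by (auto simp: user_subsets_def)
  ultimately show ?thesis using n_subsets[of "{..<K} - ?T" j] by simp
qed

lemma sum_genie_bit_files_subsets:
  assumes e: "e \<in> gen_demands N K" and us: "us \<in> request_lists K n e"
  shows "(\<Sum>f\<in>{1..N}. \<Sum>A\<in>user_subsets K j. of_bool (genie_bit e us f A)::real)
       = real (\<Sum>i<n. K - Suc i choose j)"
proof -
  have len: "length us = n" and "set us \<subseteq> {..<K}" "distinct us"
    using us by (auto simp: request_lists_def distinct_map)
  have "(\<Sum>f\<in>{1..N}. \<Sum>A\<in>user_subsets K j. of_bool (genie_bit e us f A)::real)
      = (\<Sum>A\<in>user_subsets K j. real (card {f \<in> {1..N}. genie_bit e us f A}))"
    by (subst sum.swap) (simp only: sum_of_bool_card[OF finite_atLeastAtMost])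
  also have "\<dots> = (\<Sum>A\<in>user_subsets K j. \<Sum>i<n. of_bool (\<forall>m\<le>i. us!m \<notin> A)::real)"
    by (simp only: card_genie_files[OF e us] sum_of_bool_card[OF finite_lessThan])
  also have "\<dots> = (\<Sum>i<n. real (card {A \<in> user_subsets K j. \<forall>m\<le>i. us!m \<notin> A}))"
    by (subst sum.swap) (simp only: sum_of_bool_card[OF finite_user_subsets])
  also have "\<dots> = real (\<Sum>i<n. K - Suc i choose j)"
    using card_user_subsets_avoiding_prefix[OF \<open>set us \<subseteq> {..<K}\<close> \<open>distinct us\<close>] len by simp
  finally show ?thesis .
qed

lemma sum_swap_nested:
  "(\<Sum>x\<in>X. \<Sum>y\<in>Y. \<Sum>e\<in>D. \<Sum>u\<in>V e. g x y e u) = (\<Sum>e\<in>D. \<Sum>u\<in>V e. \<Sum>x\<in>X. \<Sum>y\<in>Y. g x y e u)"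
proof -
  have "(\<Sum>x\<in>X. \<Sum>y\<in>Y. \<Sum>e\<in>D. \<Sum>u\<in>V e. g x y e u) = (\<Sum>e\<in>D. \<Sum>x\<in>X. \<Sum>y\<in>Y. \<Sum>u\<in>V e. g x y e u)"
    by (subst sum.swap) (rule sum.cong[OF refl], rule sum.swap)
  also have "\<dots> = (\<Sum>e\<in>D. \<Sum>u\<in>V e. \<Sum>x\<in>X. \<Sum>y\<in>Y. g x y e u)"
    by (rule sum.cong[OF refl]) (subst sum.swap, rule sum.cong[OF refl], rule sum.swap)
  finally show ?thesis .
qed

lemma sum_genie_weight:
  assumes ne: "\<forall>e\<in>demand_type N K s. request_lists K n e \<noteq> {}"
  shows "(\<Sum>f\<in>{1..N}. \<Sum>A\<in>user_subsets K j. genie_weight N K s n f A)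
    = real (card (demand_type N K s)) * real (\<Sum>i<n. K - Suc i choose j)"
proof -
  let ?D = "demand_type N K s" and ?q = "\<lambda>e. real (card (request_lists K n e))"
  have "(\<Sum>f\<in>{1..N}. \<Sum>A\<in>user_subsets K j. genie_weight N K s n f A)
      = (\<Sum>e\<in>?D. \<Sum>us\<in>request_lists K n e. \<Sum>f\<in>{1..N}. \<Sum>A\<in>user_subsets K j.
          of_bool (genie_bit e us f A) / ?q e)"
    unfolding genie_weight_def by (rule sum_swap_nested)
  also have "\<dots> = (\<Sum>e\<in>?D. \<Sum>us\<in>request_lists K n e. real (\<Sum>i<n. K - Suc i choose j) / ?q e)"
  proof (intro sum.cong refl)
    fix e us assume "e \<in> ?D" "us \<in> request_lists K n e"
    then show "(\<Sum>f\<in>{1..N}. \<Sum>A\<in>user_subsets K j. of_bool (genie_bit e us f A) / ?q e)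
        = real (\<Sum>i<n. K - Suc i choose j) / ?q e"
      using sum_genie_bit_files_subsets[of e N K us n j]
      by (simp add: demand_type_def sum_divide_distrib[symmetric])
  qed
  also have "\<dots> = real (card ?D) * real (\<Sum>i<n. K - Suc i choose j)"
    using ne finite_request_lists by (simp add: card_gt_0_iff)
  finally show ?thesis .
qed

definition rate_curve :: "nat \<Rightarrow> nat \<Rightarrow> nat \<Rightarrow> real" where
  "rate_curve K n t = (real (K choose (t + 1)) - real ((K - n) choose (t + 1))) / real (K choose t)"

lemma genie_weight_canonical_value:
  assumes N: "N \<ge> 1" and ne: "\<forall>e\<in>demand_type N K s. request_lists K n e \<noteq> {}" and nK: "n \<le> K"
    and jK: "j \<le> K"
  shows "genie_weight N K s n 1 {..<j} = real (card (demand_type N K s)) * rate_curve K n j / real N"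
proof -
  let ?c = "genie_weight N K s n 1 {..<j}"
  have "(\<Sum>f\<in>{1..N}. \<Sum>A\<in>user_subsets K j. genie_weight N K s n f A)
      = (\<Sum>f\<in>{1..N}. \<Sum>A\<in>user_subsets K j. ?c)"
  proof (intro sum.cong refl)
    fix f A assume "f \<in> {1..N}" "A \<in> user_subsets K j"
    then show "genie_weight N K s n f A = ?c"
      using genie_weight_canonical[of f N A K s n] by (auto simp: user_subsets_def)
  qed
  then have "real N * real (K choose j) * ?c = (\<Sum>f\<in>{1..N}. \<Sum>A\<in>user_subsets K j. genie_weight N K s n f A)"
    by (simp add: card_user_subsets)
  also have "\<dots> = real (card (demand_type N K s)) * real (\<Sum>i<n. K - Suc i choose j)"
    by (rule sum_genie_weight[OF ne])
  also have "real (\<Sum>i<n. K - Suc i choose j) = real (K choose (j + 1)) - real ((K - n) choose (j + 1))"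
  proof -
    have "real (\<Sum>i<n. K - Suc i choose j) + real (K - n choose Suc j) = real (K choose Suc j)"
      using sum_choose_hockey_stick[OF nK, of j] by (simp only: of_nat_add[symmetric])
    then show ?thesis by simp
  qed
  finally have "real N * real (K choose j) * ?c
      = real (card (demand_type N K s)) * (real (K choose (j + 1)) - real ((K - n) choose (j + 1)))" .
  then show ?thesis using N jK by (simp add: rate_curve_def field_simps)
qed

definition avg_genie_bits ::
  "nat \<Rightarrow> nat \<Rightarrow> nat \<Rightarrow> (nat \<Rightarrow> (nat \<times> nat) set) \<Rightarrow> nat \<Rightarrow> (nat \<Rightarrow> nat) \<Rightarrow> real" where
  "avg_genie_bits N F K Mc n e =
    (\<Sum>us\<in>request_lists K n e. real (card (genie_bits N F K Mc e us)) / real (card (request_lists K n e)))"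

lemma sum_avg_genie_bits_eq:
  "(\<Sum>e\<in>demand_type N K s. avg_genie_bits N F K Mc n e)
   = (\<Sum>x\<in>bit_idx N F. genie_weight N K s n (fst x) (cachers K Mc x))"
proof -
  let ?D = "demand_type N K s"
  have "(\<Sum>e\<in>?D. avg_genie_bits N F K Mc n e)
      = (\<Sum>e\<in>?D. \<Sum>us\<in>request_lists K n e. real (card (genie_bits N F K Mc e us)) / real (card (request_lists K n e)))"
    by (simp only: avg_genie_bits_def)
  also have "\<dots> = (\<Sum>e\<in>?D. \<Sum>us\<in>request_lists K n e. \<Sum>x\<in>bit_idx N F.
          of_bool (genie_bit e us (fst x) (cachers K Mc x)) / real (card (request_lists K n e)))"
  proof (intro sum.cong refl)
    fix e us
    have "real (card (genie_bits N F K Mc e us)) = (\<Sum>x\<in>bit_idx N F. of_bool (genie_bit e us (fst x) (cachers K Mc x)))"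
      unfolding genie_bits_def by (rule sum_of_bool_card[symmetric]) (rule finite_bit_idx)
    then show "real (card (genie_bits N F K Mc e us)) / real (card (request_lists K n e)) = (\<Sum>x\<in>bit_idx N F.
          of_bool (genie_bit e us (fst x) (cachers K Mc x)) / real (card (request_lists K n e)))"
      by (simp add: sum_divide_distrib)
  qed
  also have "\<dots> = (\<Sum>e\<in>?D. \<Sum>x\<in>bit_idx N F. \<Sum>us\<in>request_lists K n e.
          of_bool (genie_bit e us (fst x) (cachers K Mc x)) / real (card (request_lists K n e)))"
    by (rule sum.cong[OF refl]) (rule sum.swap)
  also have "\<dots> = (\<Sum>x\<in>bit_idx N F. \<Sum>e\<in>?D. \<Sum>us\<in>request_lists K n e.
          of_bool (genie_bit e us (fst x) (cachers K Mc x)) / real (card (request_lists K n e)))"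
    by (rule sum.swap)
  also have "\<dots> = (\<Sum>x\<in>bit_idx N F. genie_weight N K s n (fst x) (cachers K Mc x))"
    by (simp add: genie_weight_def)
  finally show ?thesis .
qed

lemma sum_avg_genie_bits_value:
  assumes N: "N \<ge> 1" and ne: "\<forall>e\<in>demand_type N K s. request_lists K n e \<noteq> {}" and nK: "n \<le> K"
  shows "(\<Sum>e\<in>demand_type N K s. avg_genie_bits N F K Mc n e)
   = real (card (demand_type N K s)) / real N * (\<Sum>x\<in>bit_idx N F. rate_curve K n (card (cachers K Mc x)))"
proof -
  have "genie_weight N K s n (fst x) (cachers K Mc x)
      = real (card (demand_type N K s)) / real N * rate_curve K n (card (cachers K Mc x))"
    if "x \<in> bit_idx N F" for x
  proof -
    have f: "fst x \<in> {1..N}" using that by (auto simp: bit_idx_def)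
    have A: "cachers K Mc x \<subseteq> {..<K}" by (auto simp: cachers_def)
    have "card (cachers K Mc x) \<le> K" using card_mono[OF _ A] by simp
    then show ?thesis using genie_weight_canonical[OF f A] genie_weight_canonical_value[OF N ne nK] by simp
  qed
  then show ?thesis unfolding sum_avg_genie_bits_eq by (simp add: sum_distrib_left)
qed

lemma opt_rate_d_ge_avg_genie_bits:
  assumes e: "e \<in> gen_demands N K" and ne: "request_lists K n e \<noteq> {}"
    and eps: "eps > 0" and F: "F \<ge> 1"
  shows "avg_genie_bits N F K Mc n e / real F - (1 / real F + real n ^ 2 * eps) \<le> opt_rate_d N K F eps e Mc"
proof -
  let ?V = "request_lists K n e" and ?S = "\<lambda>us. real (card (genie_bits N F K Mc e us))"
  have q: "real (card ?V) > 0" using ne finite_request_lists[of K n e] by (simp add: card_gt_0_iff)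
  have "(\<Sum>us\<in>?V. (?S us - 1) / real F - real n ^ 2 * eps) \<le> (\<Sum>us\<in>?V. opt_rate_d N K F eps e Mc)"
  proof (rule sum_mono)
    fix us assume "us \<in> ?V"
    then have "set us \<subseteq> {..<K}" "\<forall>u\<in>set us. e u \<noteq> 0" "length us = n"
      by (auto simp: request_lists_def)
    then show "(?S us - 1) / real F - real n ^ 2 * eps \<le> opt_rate_d N K F eps e Mc"
      using opt_rate_d_ge_genie_bits[OF e _ _ eps F] by auto
  qed
  then have "(\<Sum>us\<in>?V. ?S us) / real F - real (card ?V) * (1 / real F + real n ^ 2 * eps)
      \<le> opt_rate_d N K F eps e Mc * real (card ?V)"
    by (simp add: sum_subtractf sum_divide_distrib[symmetric] diff_divide_distrib algebra_simps)
  moreover have "avg_genie_bits N F K Mc n e / real F - (1 / real F + real n ^ 2 * eps)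
      = ((\<Sum>us\<in>?V. ?S us) / real F - real (card ?V) * (1 / real F + real n ^ 2 * eps)) / real (card ?V)"
    using q by (simp add: avg_genie_bits_def sum_divide_distrib[symmetric] field_simps)
  ultimately show ?thesis using q by (simp add: pos_divide_le_eq)
qed

lemma opt_rate_s_ge_bit_average:
  assumes N: "N \<ge> 1" and F: "F \<ge> 1" and eps: "eps > 0"
    and s: "s \<in> demand_stats N K ` gen_demands N K"
  shows "(\<Sum>x\<in>bit_idx N F. rate_curve K (N_e s) (card (cachers K Mc x))) / (real N * real F)
      - (1 / real F + real (N_e s) ^ 2 * eps) \<le> opt_rate_s N K F eps s Mc"
proof -
  let ?D = "demand_type N K s" and ?n = "N_e s" and ?loss = "1 / real F + real (N_e s) ^ 2 * eps"
  let ?avg = "avg_genie_bits N F K Mc ?n"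
  let ?bits = "\<Sum>x\<in>bit_idx N F. rate_curve K ?n (card (cachers K Mc x))"
  obtain e0 where "e0 \<in> ?D" using s by (auto simp: demand_type_def)
  then have D: "real (card ?D) > 0" using finite_demand_type by (auto simp: card_gt_0_iff)
  have ne: "\<forall>e\<in>?D. request_lists K ?n e \<noteq> {}" using request_lists_N_e_nonempty by blast
  have "(\<Sum>e\<in>?D. ?avg e / real F - ?loss) \<le> (\<Sum>e\<in>?D. opt_rate_d N K F eps e Mc)"
    using ne eps F by (intro sum_mono opt_rate_d_ge_avg_genie_bits) (auto simp: demand_type_def)
  also have "(\<Sum>e\<in>?D. ?avg e / real F - ?loss) = (\<Sum>e\<in>?D. ?avg e) / real F - real (card ?D) * ?loss"
    by (simp only: sum_subtractf sum_divide_distrib[of _ ?D "real F"] sum_constant)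
  also have "\<dots> = real (card ?D) * (?bits / (real N * real F) - ?loss)"
    using sum_avg_genie_bits_value[OF N ne N_e_le_users[OF \<open>e0 \<in> ?D\<close>], of F Mc]
    by (simp add: algebra_simps)
  finally show ?thesis using D by (simp add: opt_rate_s_def field_simps)
qed

section \<open>The lower convex envelope\<close>

lemma rate_curve_nonneg: "rate_curve K n t \<ge> 0"
  unfolding rate_curve_def using binomial_right_mono[of "K - n" K "t+1"] by (intro divide_nonneg_nonneg) auto

lemma rate_curve_K: "rate_curve K n K = 0"
  by (simp add: rate_curve_def binomial_eq_0)

lemma sum_mix_last:
  fixes g :: "nat \<Rightarrow> real"
  shows "(\<Sum>i\<le>K. ((1-th) * lam i + (if i = K then th else 0)) * g i)
       = (1-th) * (\<Sum>i\<le>K. lam i * g i) + th * g K"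
proof -
  have "(\<Sum>i\<le>K. ((1-th) * lam i + (if i = K then th else 0)) * g i)
      = (\<Sum>i\<le>K. (1-th) * (lam i * g i)) + (\<Sum>i\<le>K. (if i = K then th * g i else 0))"
  proof -
    have "((1-th) * lam i + (if i = K then th else 0)) * g i
        = (1-th) * (lam i * g i) + (if i = K then th * g i else 0)" for i
      by (cases "i = K") (simp_all add: algebra_simps)
    then show ?thesis by (simp only: sum.distrib)
  qed
  also have "(\<Sum>i\<le>K. (if i = K then th * g i else 0)) = th * g K"
    by (simp add: sum.delta)
  finally show ?thesis by (simp add: sum_distrib_left)
qed

lemma lower_conv_env_le_weights:
  fixes lam f :: "nat \<Rightarrow> real"
  assumes "\<forall>i\<le>K. lam i \<ge> 0" "(\<Sum>i\<le>K. lam i) = 1" "(\<Sum>i\<le>K. lam i * real i) = x"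
    and f0: "\<forall>t. f t \<ge> 0"
  shows "lower_conv_env K f x \<le> (\<Sum>i\<le>K. lam i * f i)"
  unfolding lower_conv_env_def
proof (rule cInf_lower)
  show "(\<Sum>i\<le>K. lam i * f i) \<in> {\<Sum>i\<le>K. lam i * f i | lam.
      (\<forall>i\<le>K. lam i \<ge> 0) \<and> (\<Sum>i\<le>K. lam i) = 1 \<and> (\<Sum>i\<le>K. lam i * real i) = x}"
    using assms(1-3) by blast
  show "bdd_below {\<Sum>i\<le>K. lam i * f i | lam.
      (\<forall>i\<le>K. lam i \<ge> 0) \<and> (\<Sum>i\<le>K. lam i) = 1 \<and> (\<Sum>i\<le>K. lam i * real i) = x}"
    using f0 by (intro bdd_belowI[where m=0]) (auto intro: sum_nonneg)
qed

text \<open>Moving mass \<open>\<theta>\<close> to the point \<open>K\<close> raises the mean to exactly \<open>x\<close> and, as \<open>f K = 0\<close>,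
  only scales the value by \<open>1 - \<theta>\<close>.\<close>
lemma lower_conv_env_le:
  fixes lam f :: "nat \<Rightarrow> real"
  assumes lam0: "\<forall>i\<le>K. lam i \<ge> 0" and lam1: "(\<Sum>i\<le>K. lam i) = 1"
    and xle: "(\<Sum>i\<le>K. lam i * real i) \<le> x" and xK: "x \<le> real K"
    and f0: "\<forall>t. f t \<ge> 0" and fK0: "f K = 0"
  shows "lower_conv_env K f x \<le> (\<Sum>i\<le>K. lam i * f i)"
proof -
  define x' where "x' = (\<Sum>i\<le>K. lam i * real i)"
  define th where "th = (if x' < real K then (x - x') / (real K - x') else 0)"
  have th0: "0 \<le> th" and th1: "th \<le> 1" using xle xK by (auto simp: th_def x'_def divide_le_eq_1)
  define lam' where "lam' i = (1-th) * lam i + (if i = K then th else 0)" for i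
  have "(\<Sum>i\<le>K. lam' i * real i) = (1-th) * x' + th * real K"
    using sum_mix_last[of th lam K real] by (simp add: lam'_def x'_def)
  also have "\<dots> = x"
  proof (cases "x' < real K")
    case True
    then have "th * (real K - x') = x - x'" by (simp add: th_def)
    then show ?thesis by (simp add: algebra_simps)
  next
    case False
    then show ?thesis using xle xK by (simp add: th_def x'_def)
  qed
  finally have "lower_conv_env K f x \<le> (\<Sum>i\<le>K. lam' i * f i)"
    using lam0 th0 th1 f0 sum_mix_last[of th lam K "\<lambda>_. 1"] lam1
    by (intro lower_conv_env_le_weights) (auto simp: lam'_def)
  also have "\<dots> = (1-th) * (\<Sum>i\<le>K. lam i * f i)"
    using sum_mix_last[of th lam K f] fK0 by (simp add: lam'_def)
  also have "\<dots> \<le> (\<Sum>i\<le>K. lam i * f i)"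
  proof -
    have "0 \<le> (\<Sum>i\<le>K. lam i * f i)" using lam0 f0 by (intro sum_nonneg) auto
    then show ?thesis using th0 by (simp add: algebra_simps)
  qed
  finally show ?thesis .
qed

lemma card_cachers_le: "card (cachers K Mc x) \<le> K"
  using card_mono[of "{..<K}" "cachers K Mc x"] by (auto simp: cachers_def)

lemma sum_card_cachers_le:
  assumes vp: "valid_prefetch N K F M Mc"
  shows "(\<Sum>x\<in>bit_idx N F. real (card (cachers K Mc x))) \<le> real K * M * real F"
proof -
  let ?T = "bit_idx N F"
  have "(\<Sum>x\<in>?T. real (card (cachers K Mc x))) = (\<Sum>x\<in>?T. \<Sum>k\<in>{..<K}. of_bool (x \<in> Mc k)::real)"
  proof (rule sum.cong[OF refl])
    fix x
    have "cachers K Mc x = {k \<in> {..<K}. x \<in> Mc k}" by (auto simp: cachers_def)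
    then show "real (card (cachers K Mc x)) = (\<Sum>k\<in>{..<K}. of_bool (x \<in> Mc k)::real)"
      by (simp add: Int_def)
  qed
  also have "\<dots> = (\<Sum>k\<in>{..<K}. \<Sum>x\<in>?T. of_bool (x \<in> Mc k)::real)" by (rule sum.swap)
  also have "\<dots> = (\<Sum>k\<in>{..<K}. real (card (Mc k)))"
  proof (rule sum.cong[OF refl])
    fix k assume "k \<in> {..<K}"
    then have "Mc k \<subseteq> ?T" using vp by (simp add: valid_prefetch_def)
    then have "{x \<in> ?T. x \<in> Mc k} = Mc k" by auto
    then show "(\<Sum>x\<in>?T. of_bool (x \<in> Mc k)::real) = real (card (Mc k))"
      using sum_of_bool_card[OF finite_bit_idx, of "\<lambda>x. x \<in> Mc k"] by simp
  qed
  also have "\<dots> \<le> (\<Sum>k\<in>{..<K}. M * real F)"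
    by (rule sum_mono) (use vp in \<open>simp add: valid_prefetch_def\<close>)
  also have "\<dots> = real K * M * real F" by simp
  finally show ?thesis .
qed

lemma sum_card_fibres:
  fixes h :: "nat \<Rightarrow> real"
  assumes "finite T" "\<forall>x\<in>T. g x \<le> K"
  shows "(\<Sum>i\<le>K. real (card {x\<in>T. g x = i}) * h i) = (\<Sum>x\<in>T. h (g x))"
proof -
  have "(\<Sum>i\<le>K. real (card {x\<in>T. g x = i}) * h i) = (\<Sum>i\<le>K. \<Sum>x\<in>{x. x \<in> T \<and> g x = i}. h (g x))"
  proof (rule sum.cong[OF refl])
    fix i
    have "(\<Sum>x\<in>{x. x \<in> T \<and> g x = i}. h (g x)) = (\<Sum>x\<in>{x. x \<in> T \<and> g x = i}. h i)"
      by (rule sum.cong) auto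
    then show "real (card {x\<in>T. g x = i}) * h i = (\<Sum>x\<in>{x. x \<in> T \<and> g x = i}. h (g x))" by simp
  qed
  also have "\<dots> = (\<Sum>x\<in>T. h (g x))"
    by (rule sum.group) (use assms in auto)
  finally show ?thesis .
qed

lemma lower_conv_env_le_bit_average:
  assumes vp: "valid_prefetch N K F M Mc" and N: "N \<ge> 1" and F: "F \<ge> 1" and MN: "M \<le> real N"
  shows "lower_conv_env K (rate_curve K n) (real K * M / real N)
     \<le> (\<Sum>x\<in>bit_idx N F. rate_curve K n (card (cachers K Mc x))) / (real N * real F)"
proof -
  let ?T = "bit_idx N F"
  let ?g = "\<lambda>x. card (cachers K Mc x)"
  define NF where "NF = real N * real F"
  have NF0: "NF > 0" using N F by (simp add: NF_def)
  have cT: "real (card ?T) = NF" by (simp add: card_bit_idx NF_def)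
  define lam where "lam i = real (card {x\<in>?T. ?g x = i}) / NF" for i
  have gK: "\<forall>x\<in>?T. ?g x \<le> K" using card_cachers_le by blast
  have G: "(\<Sum>i\<le>K. lam i * h i) = (\<Sum>x\<in>?T. h (?g x)) / NF" for h
  proof -
    have "(\<Sum>i\<le>K. lam i * h i) = (\<Sum>i\<le>K. real (card {x\<in>?T. ?g x = i}) * h i) / NF"
      by (simp add: lam_def sum_divide_distrib)
    also have "\<dots> = (\<Sum>x\<in>?T. h (?g x)) / NF" by (simp only: sum_card_fibres[OF finite_bit_idx gK])
    finally show ?thesis .
  qed
  have l0: "\<forall>i\<le>K. lam i \<ge> 0" using NF0 by (simp add: lam_def)
  have l1: "(\<Sum>i\<le>K. lam i) = 1" using G[of "\<lambda>_. 1"] cT NF0 by simp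
  have lx: "(\<Sum>i\<le>K. lam i * real i) \<le> real K * M / real N"
  proof -
    have "(\<Sum>i\<le>K. lam i * real i) = (\<Sum>x\<in>?T. real (?g x)) / NF" using G[of real] by simp
    also have "\<dots> \<le> (real K * M * real F) / NF"
      using sum_card_cachers_le[OF vp] NF0 by (intro divide_right_mono) auto
    also have "\<dots> = real K * M / real N" using F by (simp add: NF_def)
    finally show ?thesis .
  qed
  have xK: "real K * M / real N \<le> real K" using MN N
    by (simp add: divide_le_eq mult_left_mono)
  have "lower_conv_env K (rate_curve K n) (real K * M / real N) \<le> (\<Sum>i\<le>K. lam i * rate_curve K n i)"
    by (rule lower_conv_env_le[OF l0 l1 lx xK]) (auto simp: rate_curve_nonneg rate_curve_K)
  also have "\<dots> = (\<Sum>x\<in>?T. rate_curve K n (?g x)) / NF" by (rule G)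
  finally show ?thesis by (simp add: NF_def)
qed

theorem lemma4:
  fixes N K F :: nat and M eps :: real and s :: "nat list"
    and Mc :: "nat \<Rightarrow> (nat \<times> nat) set"
  assumes "N \<ge> 1" and "K \<ge> 1" and "F \<ge> 1"
    and "0 \<le> M" and "M \<le> real N"
    and "eps > 0"
    and "s \<in> demand_stats N K ` gen_demands N K"
    and "valid_prefetch N K F M Mc"
  shows "opt_rate_s N K F eps s Mc \<ge>
     lower_conv_env K
        (\<lambda>t. (real (K choose (t + 1)) - real ((K - N_e s) choose (t + 1))) / real (K choose t))
        (real K * M / real N)
     - (1 / real F + real (N_e s) ^ 2 * eps)"
proof -
  have "(\<lambda>t. (real (K choose (t + 1)) - real ((K - N_e s) choose (t + 1))) / real (K choose t))
      = rate_curve K (N_e s)"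
    by (simp add: rate_curve_def fun_eq_iff)
  moreover have "lower_conv_env K (rate_curve K (N_e s)) (real K * M / real N)
      \<le> (\<Sum>x\<in>bit_idx N F. rate_curve K (N_e s) (card (cachers K Mc x))) / (real N * real F)"
    using lower_conv_env_le_bit_average assms(8,1,3,5) .
  ultimately show ?thesis
    using opt_rate_s_ge_bit_average[OF assms(1,3,6,7), of Mc] by simp
qed

end
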